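(* Let $P_n$ be the path with vertex set $\{1,\dots,n\}$ and edges $\{j,j+1\}$, and let $A$ be a set of $m$ vertices with $2\le m\le n$. The following are equivalent: (1) $A$ is a maximizer of $W$ on $P_n$; (2) $A$ is a local maximizer of $W$ on $P_n$; (3) if $m$ is even, $A=\{1,\dots,\frac m2\}\cup\{n-\frac m2+1,\dots,n\}$; and if $m$ is odd, $A=\{1,\dots,\frac{m-1}{2}\}\cup\{j\}\cup\{n-\frac{m-1}{2}+1,\dots,n\}$ for some integer $j$ with $\frac{m-1}{2}<j<n-\frac{m-1}{2}+1$.
   Context: $W(A)=\sum_{\{u,v\}\subseteq A,u\ne v}d(u,v)$ over unordered pairs, $d$ the shortest-path distance. $A$ is a maximizer of $W$ if $W(A)=\max\{W(B): B\subseteq V(P_n), |B|=|A|\}$. A perturbation of $A$ is a set $(A\setminus\{u\})\cup\{v\}$ with $u\in A$, $v\notin A$, $uv$ an edge; $A$ is a local maximizer of $W$ if $W(A)\ge W(B)$ for every perturbation $B$ of $A$ (i.e. $W(A)$ equals the maximum of $W$ over perturbations of $A$). *)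

theory Defs
  imports Main
begin

text \<open>The path P_n: vertex set {1..n}, edges {j, j+1}. Shortest-path distance is |u - v|.\<close>

definition path_vertices :: "nat \<Rightarrow> nat set" where
  "path_vertices n = {1..n}"

definition path_edge :: "nat \<Rightarrow> nat \<Rightarrow> nat \<Rightarrow> bool" where
  "path_edge n u v \<longleftrightarrow> u \<in> path_vertices n \<and> v \<in> path_vertices n \<and> (v = u + 1 \<or> u = v + 1)"

definition path_dist :: "nat \<Rightarrow> nat \<Rightarrow> nat" where
  "path_dist u v = (if u \<le> v then v - u else u - v)"

definition W :: "nat set \<Rightarrow> nat" where
  "W A = (\<Sum>p\<in>{(u, v). u \<in> A \<and> v \<in> A \<and> u < v}. path_dist (fst p) (snd p))"

definition is_maximizer :: "nat \<Rightarrow> nat set \<Rightarrow> bool" where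
  "is_maximizer n A \<longleftrightarrow> A \<subseteq> path_vertices n \<and>
     (\<forall>B. B \<subseteq> path_vertices n \<and> card B = card A \<longrightarrow> W B \<le> W A)"

definition perturbations :: "nat \<Rightarrow> nat set \<Rightarrow> nat set set" where
  "perturbations n A = {(A - {u}) \<union> {v} | u v. u \<in> A \<and> v \<notin> A \<and> path_edge n u v}"

definition is_local_maximizer :: "nat \<Rightarrow> nat set \<Rightarrow> bool" where
  "is_local_maximizer n A \<longleftrightarrow> A \<subseteq> path_vertices n \<and>
     (\<forall>B \<in> perturbations n A. W B \<le> W A)"

end

theory Submission
  imports Defs
begin

text \<open>Moving a vertex u of A one step down to a free vertex u - 1 changes W by the number of
  elements of A above u minus the number below u. Hence in a local maximizer every element whose
  lower neighbour is free has at least half of the other elements below it; if some t \<le> m/2 were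
  missing from A, the least element of A above t would violate this. The reflection x \<mapsto> n + 1 - x
  preserves W and local maximality, so the last \<lfloor>m/2\<rfloor> vertices lie in A as well. This pins a
  local maximizer down to the shape (3). All sets of that shape have the same W, since the middle
  vertex j lies between the two blocks and its total distance to them does not depend on j. A
  global maximizer exists and is local, hence of shape (3), so every set of shape (3) attains
  the maximum.\<close>

lemma path_dist_commute: "path_dist u v = path_dist v u"
  by (simp add: path_dist_def)

lemma W_insert:
  assumes "finite B" "x \<notin> B"
  shows "W (insert x B) = W B + (\<Sum>b\<in>B. path_dist b x)"
proof -
  let ?pairs = "\<lambda>A. {(u, v). u \<in> A \<and> v \<in> A \<and> u < v}"
  let ?above = "{b\<in>B. x < b}" and ?below = "{b\<in>B. b < x}"
  have pairs_insert:
    "?pairs (insert x B) = ?pairs B \<union> (Pair x ` ?above \<union> (\<lambda>b. (b, x)) ` ?below)"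
    using assms(2) by auto
  have "finite (?pairs B)"
    by (rule finite_subset[of _ "B \<times> B"]) (auto simp: assms(1))
  then have "W (insert x B)
      = W B + ((\<Sum>b\<in>?above. path_dist x b) + (\<Sum>b\<in>?below. path_dist b x))"
    unfolding W_def pairs_insert using assms
    by (subst sum.union_disjoint, auto, subst sum.union_disjoint, auto simp: sum.reindex inj_on_def)
  also have "(\<Sum>b\<in>?above. path_dist x b) + (\<Sum>b\<in>?below. path_dist b x)
      = (\<Sum>b\<in>?above \<union> ?below. path_dist b x)"
    using assms(1) by (simp add: sum.union_disjoint path_dist_commute disjoint_iff)
  also have "?above \<union> ?below = B"
    using assms(2) by (auto simp: not_less order_le_less)
  finally show ?thesis .
qed

lemma W_image_isometry:
  assumes "finite A" "inj_on f A"
    and "\<And>a b. a \<in> A \<Longrightarrow> b \<in> A \<Longrightarrow> path_dist (f a) (f b) = path_dist a b"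
  shows "W (f ` A) = W A"
  using assms
proof (induction A rule: finite_induct)
  case empty
  then show ?case by simp
next
  case (insert x B)
  have "f x \<notin> f ` B" using insert.hyps(2) insert.prems(1) by auto
  then have "W (f ` insert x B) = W (f ` B) + (\<Sum>b\<in>B. path_dist (f b) (f x))"
    using insert.hyps(1) insert.prems(1) by (simp add: W_insert sum.reindex inj_on_insert)
  also have "\<dots> = W B + (\<Sum>b\<in>B. path_dist b x)"
    using insert.IH insert.prems by (simp add: inj_on_insert)
  also have "\<dots> = W (insert x B)"
    using insert.hyps by (simp add: W_insert)
  finally show ?case .
qed

lemma card_split_at:
  fixes A :: "nat set"
  assumes "finite A" "u \<in> A"
  shows "card A = Suc (card {a\<in>A. a < u} + card {a\<in>A. u < a})"
proof -
  have "A = insert u ({a\<in>A. a < u} \<union> {a\<in>A. u < a})"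
    using assms(2) by (auto simp: nat_neq_iff)
  also have "card \<dots> = Suc (card {a\<in>A. a < u} + card {a\<in>A. u < a})"
    using assms(1) by (simp add: card_Un_disjoint disjoint_iff)
  finally show ?thesis .
qed

lemma W_shift_down:
  assumes "finite C" "w \<notin> C" "Suc w \<notin> C"
  shows "W (insert w C) + card {c\<in>C. c < w} = W (insert (Suc w) C) + card {c\<in>C. Suc w < c}"
proof -
  have "(\<Sum>c\<in>C. path_dist c w + (if c < w then 1 else 0))
      = (\<Sum>c\<in>C. path_dist c (Suc w) + (if Suc w < c then 1 else 0))"
  proof (rule sum.cong)
    fix c assume "c \<in> C"
    then have "c \<noteq> w" "c \<noteq> Suc w" using assms(2,3) by auto
    then show "path_dist c w + (if c < w then 1 else 0) = path_dist c (Suc w) + (if Suc w < c then 1 else 0)"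
      by (auto simp: path_dist_def)
  qed simp
  then show ?thesis
    using assms by (simp add: W_insert sum.distrib sum.inter_filter[symmetric])
qed

lemma local_maximizer_subset: "is_local_maximizer n A \<Longrightarrow> A \<subseteq> {1..n}"
  by (simp add: is_local_maximizer_def path_vertices_def)

lemma local_maximizer_card_below:
  assumes loc: "is_local_maximizer n A" and "Suc w \<in> A" "w \<notin> A" "1 \<le> w"
  shows "card A \<le> 2 * card {a\<in>A. a < Suc w} + 1"
proof -
  define C where "C = A - {Suc w}"
  have sub: "A \<subseteq> {1..n}" using loc by (rule local_maximizer_subset)
  then have fin: "finite A" by (rule finite_subset) simp
  have A_eq: "A = insert (Suc w) C" using assms(2) C_def by auto
  have "insert w C \<in> perturbations n A"
    unfolding perturbations_def path_edge_def path_vertices_def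
    using assms(2-4) sub C_def by (intro CollectI exI[of _ "Suc w"] exI[of _ w]) auto
  then have "W (insert w C) \<le> W A"
    using loc by (simp add: is_local_maximizer_def)
  moreover have "W (insert w C) + card {c\<in>C. c < w} = W A + card {c\<in>C. Suc w < c}"
    unfolding A_eq using fin assms(3) C_def by (intro W_shift_down) auto
  moreover have "{c\<in>C. c < w} = {a\<in>A. a < Suc w}" "{c\<in>C. Suc w < c} = {a\<in>A. Suc w < a}"
    using assms(3) C_def by (auto simp: less_Suc_eq)
  ultimately show ?thesis
    using card_split_at[OF fin assms(2)] by simp
qed

lemma local_maximizer_contains_initial:
  assumes loc: "is_local_maximizer n A" and "1 \<le> t" "2 * t \<le> card A"
  shows "t \<in> A"
proof (rule ccontr)
  assume "t \<notin> A"
  have sub: "A \<subseteq> {1..n}" using loc by (rule local_maximizer_subset)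
  then have fin: "finite A" by (rule finite_subset) simp
  have "{a\<in>A. a < t} \<subseteq> {1..<t}" using sub by auto
  from card_mono[OF finite_atLeastLessThan this]
  have few_below: "card {a\<in>A. a < t} < t"
    using assms(2) by simp
  define X where "X = {a\<in>A. t < a}"
  have "finite X" using fin X_def by simp
  have "A = {a\<in>A. a < t} \<union> X"
    using \<open>t \<notin> A\<close> X_def by (auto simp: nat_neq_iff)
  then have "card A \<le> card {a\<in>A. a < t} + card X"
    by (metis card_Un_le)
  then have "X \<noteq> {}" using few_below assms(3) by auto
  define u where "u = Min X"
  have "u \<in> X" using Min_in[OF \<open>finite X\<close> \<open>X \<noteq> {}\<close>] u_def by simp
  then have "u \<in> A" "t < u" using X_def by auto
  then obtain w where "u = Suc w" "t \<le> w" by (cases u) auto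
  have minimal: "\<not> t < a" if "a \<in> A" "a < u" for a
    using that Min_le[OF \<open>finite X\<close>, of a] u_def X_def by auto
  have "w \<notin> A" using minimal \<open>t \<notin> A\<close> \<open>u = Suc w\<close> \<open>t \<le> w\<close> by (auto simp: le_less)
  have "{a\<in>A. a < u} = {a\<in>A. a < t}"
    using minimal \<open>t < u\<close> \<open>t \<notin> A\<close> by (auto simp: not_less le_less)
  then have "card A \<le> 2 * card {a\<in>A. a < t} + 1"
    using local_maximizer_card_below[OF loc _ \<open>w \<notin> A\<close>] \<open>u \<in> A\<close> \<open>u = Suc w\<close>
      \<open>t \<le> w\<close> assms(2)
    by simp
  then show False using few_below assms(3) by simp
qed

lemma inj_on_reflect: "inj_on (\<lambda>x. Suc n - x) {..Suc n}"
  by (intro inj_onI) (metis atMost_iff diff_diff_cancel)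

lemma W_reflect:
  assumes "B \<subseteq> {..Suc n}"
  shows "W ((\<lambda>x. Suc n - x) ` B) = W B"
proof (rule W_image_isometry)
  show "finite B" using assms by (rule finite_subset) simp
  show "inj_on (\<lambda>x. Suc n - x) B"
    using assms by (rule inj_on_subset[OF inj_on_reflect])
  show "path_dist (Suc n - a) (Suc n - b) = path_dist a b" if "a \<in> B" "b \<in> B" for a b
    using assms that by (auto simp: path_dist_def)
qed

lemma local_maximizer_reflect:
  assumes loc: "is_local_maximizer n A"
  shows "is_local_maximizer n ((\<lambda>x. Suc n - x) ` A)"
proof -
  let ?r = "\<lambda>x. Suc n - x"
  have sub: "A \<subseteq> {1..n}" using loc by (rule local_maximizer_subset)
  have "W B' \<le> W (?r ` A)" if pert: "B' \<in> perturbations n (?r ` A)" for B'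
  proof -
    obtain u' v' where B': "B' = (?r ` A - {u'}) \<union> {v'}" "u' \<in> ?r ` A" "v' \<notin> ?r ` A"
      "path_edge n u' v'"
      using pert unfolding perturbations_def by blast
    then obtain u where "u \<in> A" "u' = ?r u" by blast
    define v where "v = ?r v'"
    have "v' = ?r v" "v \<in> {1..n}" using B'(4) v_def by (auto simp: path_edge_def path_vertices_def)
    have "(A - {u}) \<union> {v} \<in> perturbations n A"
      unfolding perturbations_def
      using B'(3,4) \<open>u \<in> A\<close> \<open>u' = ?r u\<close> \<open>v' = ?r v\<close> \<open>v \<in> {1..n}\<close> sub
      by (intro CollectI exI[of _ u] exI[of _ v]) (auto simp: path_edge_def path_vertices_def)
    then have "W ((A - {u}) \<union> {v}) \<le> W A" using loc by (simp add: is_local_maximizer_def)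
    moreover have "B' = ?r ` ((A - {u}) \<union> {v})"
      using B'(1) \<open>u \<in> A\<close> \<open>u' = ?r u\<close> \<open>v' = ?r v\<close> sub
      by (subst image_Un, subst inj_on_image_set_diff[OF inj_on_reflect]) auto
    then have "W B' = W ((A - {u}) \<union> {v})"
      using sub \<open>v \<in> {1..n}\<close> by (simp only:) (rule W_reflect, auto)
    moreover have "W (?r ` A) = W A" using sub by (intro W_reflect) auto
    ultimately show ?thesis by simp
  qed
  moreover have "?r ` A \<subseteq> path_vertices n" using sub by (auto simp: path_vertices_def subset_iff)
  ultimately show ?thesis by (simp add: is_local_maximizer_def)
qed

lemma local_maximizer_contains_final:
  assumes loc: "is_local_maximizer n A" and "t \<le> n" "2 * (Suc n - t) \<le> card A"
  shows "t \<in> A"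
proof -
  let ?r = "\<lambda>x. Suc n - x"
  have sub: "A \<subseteq> {1..n}" using loc by (rule local_maximizer_subset)
  have "inj_on ?r A"
    using sub by (intro inj_on_subset[OF inj_on_reflect]) auto
  then have "card (?r ` A) = card A" by (rule card_image)
  then have "?r t \<in> ?r ` A"
    using assms(2,3) by (intro local_maximizer_contains_initial[OF local_maximizer_reflect[OF loc]]) auto
  then obtain a where "a \<in> A" "Suc n - t = Suc n - a" by blast
  moreover have "a \<le> n" using \<open>a \<in> A\<close> sub by auto
  ultimately show ?thesis using assms(2) by (metis diff_diff_cancel le_SucI)
qed

definition packed_at_ends :: "nat \<Rightarrow> nat \<Rightarrow> nat set \<Rightarrow> bool" where
  "packed_at_ends n m A \<longleftrightarrow> (if even m then A = {1..m div 2} \<union> {n - m div 2 + 1..n}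
     else (\<exists>j::nat. (m - 1) div 2 < j \<and> j < n - (m - 1) div 2 + 1 \<and>
             A = {1..(m - 1) div 2} \<union> {j} \<union> {n - (m - 1) div 2 + 1..n}))"

lemma local_maximizer_packed_at_ends:
  assumes loc: "is_local_maximizer n A"
  shows "packed_at_ends n (card A) A"
proof -
  define k where "k = card A div 2"
  let ?ends = "{1..k} \<union> {n - k + 1..n}"
  have sub: "A \<subseteq> {1..n}" using loc by (rule local_maximizer_subset)
  then have fin: "finite A" by (rule finite_subset) simp
  have "card A \<le> n" using card_mono[OF finite_atLeastAtMost sub] by simp
  then have "2 * k \<le> n" using k_def by simp
  have ends_sub: "?ends \<subseteq> A"
  proof
    fix t assume "t \<in> ?ends"
    then show "t \<in> A"
    proof
      assume "t \<in> {1..k}"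
      then show ?thesis using k_def by (intro local_maximizer_contains_initial[OF loc]) auto
    next
      assume "t \<in> {n - k + 1..n}"
      then show ?thesis using k_def by (intro local_maximizer_contains_final[OF loc]) auto
    qed
  qed
  have card_ends: "card ?ends = 2 * k"
    using \<open>2 * k \<le> n\<close> by (subst card_Un_disjoint) auto
  show ?thesis
  proof (cases "even (card A)")
    case True
    then have "?ends = A" using card_subset_eq[OF fin ends_sub] card_ends k_def by simp
    then show ?thesis using True unfolding packed_at_ends_def k_def by simp
  next
    case False
    then have k: "card A = 2 * k + 1" "(card A - 1) div 2 = k" using k_def by presburger+
    then have "card (A - ?ends) = 1" using card_Diff_subset[OF _ ends_sub] card_ends by simp
    then obtain j where j: "A - ?ends = {j}" by (rule card_1_singletonE)
    then have "j \<in> A" "j \<notin> ?ends" by auto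
    then have "k < j" "j < n - k + 1" using sub by auto
    moreover have "A = {1..k} \<union> {j} \<union> {n - k + 1..n}" using j ends_sub by blast
    ultimately show ?thesis using False k unfolding packed_at_ends_def by auto
  qed
qed

lemma sum_path_dist_ends:
  assumes "k < j" "j \<le> n - k"
  shows "(\<Sum>b\<in>{1..k} \<union> {n - k + 1..n}. path_dist b j) + \<Sum>{1..k} = \<Sum>{n - k + 1..n}"
proof -
  have low: "(\<Sum>b\<in>{1..k}. path_dist b j) + \<Sum>{1..k} = k * j"
  proof -
    have "(\<Sum>b\<in>{1..k}. path_dist b j) + \<Sum>{1..k} = (\<Sum>b\<in>{1..k}. path_dist b j + b)"
      by (simp add: sum.distrib)
    also have "\<dots> = (\<Sum>b\<in>{1..k}. j)"
      using assms(1) by (intro sum.cong) (auto simp: path_dist_def)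
    finally show ?thesis by simp
  qed
  have high: "(\<Sum>b\<in>{n - k + 1..n}. path_dist b j) + k * j = \<Sum>{n - k + 1..n}"
  proof -
    have "(\<Sum>b\<in>{n - k + 1..n}. path_dist b j) + k * j
        = (\<Sum>b\<in>{n - k + 1..n}. path_dist b j + j)"
      using assms by (simp add: sum.distrib)
    also have "\<dots> = \<Sum>{n - k + 1..n}"
      using assms(2) by (intro sum.cong) (auto simp: path_dist_def)
    finally show ?thesis .
  qed
  have "(\<Sum>b\<in>{1..k} \<union> {n - k + 1..n}. path_dist b j)
      = (\<Sum>b\<in>{1..k}. path_dist b j) + (\<Sum>b\<in>{n - k + 1..n}. path_dist b j)"
    using assms by (intro sum.union_disjoint) auto
  then show ?thesis using low high by simp
qed

lemma W_packed_at_ends_eq: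
  assumes "packed_at_ends n m A" "packed_at_ends n m B"
  shows "W A = W B"
proof (cases "even m")
  case True
  then show ?thesis using assms unfolding packed_at_ends_def by simp
next
  case False
  define k where "k = (m - 1) div 2"
  let ?ends = "{1..k} \<union> {n - k + 1..n}"
  have W_middle: "W C + \<Sum>{1..k} = W ?ends + \<Sum>{n - k + 1..n}"
    if "k < j" "j < n - k + 1" "C = {1..k} \<union> {j} \<union> {n - k + 1..n}" for C j
  proof -
    have "C = insert j ?ends" "j \<notin> ?ends" using that by auto
    then have "W C = W ?ends + (\<Sum>b\<in>?ends. path_dist b j)"
      by (simp only:) (rule W_insert, auto)
    then show ?thesis using sum_path_dist_ends[of k j n] that(1,2) by simp
  qed
  obtain j where "k < j" "j < n - k + 1" "A = {1..k} \<union> {j} \<union> {n - k + 1..n}"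
    using assms(1) False unfolding packed_at_ends_def k_def by meson
  then have "W A + \<Sum>{1..k} = W ?ends + \<Sum>{n - k + 1..n}" by (rule W_middle)
  moreover obtain j' where "k < j'" "j' < n - k + 1" "B = {1..k} \<union> {j'} \<union> {n - k + 1..n}"
    using assms(2) False unfolding packed_at_ends_def k_def by meson
  then have "W B + \<Sum>{1..k} = W ?ends + \<Sum>{n - k + 1..n}" by (rule W_middle)
  ultimately show ?thesis by simp
qed

lemma maximizer_imp_local_maximizer:
  assumes "is_maximizer n A"
  shows "is_local_maximizer n A"
  unfolding is_local_maximizer_def
proof (intro conjI ballI)
  show sub: "A \<subseteq> path_vertices n" using assms by (simp add: is_maximizer_def)
  then have fin: "finite A" by (rule finite_subset) (simp add: path_vertices_def)
  fix B assume "B \<in> perturbations n A"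
  then obtain u v where B: "B = (A - {u}) \<union> {v}" "u \<in> A" "v \<notin> A" "path_edge n u v"
    unfolding perturbations_def by blast
  have "B \<subseteq> path_vertices n" using B sub by (auto simp: path_edge_def)
  moreover have "card B = Suc (card (A - {u}))" using B fin by simp
  then have "card B = card A" using card_Suc_Diff1[OF fin B(2)] by simp
  ultimately show "W B \<le> W A" using assms by (simp add: is_maximizer_def)
qed

lemma maximizer_exists:
  assumes "A \<subseteq> path_vertices n"
  obtains B where "card B = card A" "is_maximizer n B"
proof -
  let ?S = "{B. B \<subseteq> path_vertices n \<and> card B = card A}"
  have fin: "finite (W ` ?S)"
    by (rule finite_imageI, rule finite_subset[of _ "Pow (path_vertices n)"])
      (auto simp: path_vertices_def)
  moreover have "W ` ?S \<noteq> {}" using assms by blast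
  ultimately have "Max (W ` ?S) \<in> W ` ?S" by (rule Max_in)
  then obtain B where "B \<in> ?S" "W B = Max (W ` ?S)" by (auto simp: image_iff)
  moreover have "W C \<le> Max (W ` ?S)" if "C \<in> ?S" for C
    using fin that by (intro Max_ge) auto
  ultimately have "card B = card A" "is_maximizer n B" unfolding is_maximizer_def by auto
  then show ?thesis by (rule that)
qed

lemma packed_at_ends_imp_maximizer:
  assumes sub: "A \<subseteq> path_vertices n" and packed: "packed_at_ends n (card A) A"
  shows "is_maximizer n A"
proof -
  obtain B where B: "card B = card A" "is_maximizer n B"
    using maximizer_exists[OF sub] .
  then have "packed_at_ends n (card A) B"
    using local_maximizer_packed_at_ends maximizer_imp_local_maximizer by metis
  then have "W B = W A" using packed by (rule W_packed_at_ends_eq)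
  then show ?thesis using B sub by (simp add: is_maximizer_def)
qed

theorem mainTheorem11:
  fixes n m :: nat and A :: "nat set"
  assumes "A \<subseteq> {1..n}" and "card A = m" and "2 \<le> m" and "m \<le> n"
  shows "(is_maximizer n A \<longleftrightarrow> is_local_maximizer n A) \<and>
         (is_local_maximizer n A \<longleftrightarrow>
            (if even m then A = {1..m div 2} \<union> {n - m div 2 + 1..n}
             else (\<exists>j::nat. (m - 1) div 2 < j \<and> j < n - (m - 1) div 2 + 1 \<and>
                     A = {1..(m - 1) div 2} \<union> {j} \<union> {n - (m - 1) div 2 + 1..n})))"
proof -
  have sub: "A \<subseteq> path_vertices n" using assms(1) by (simp add: path_vertices_def)
  have "is_local_maximizer n A \<Longrightarrow> packed_at_ends n m A"
    using local_maximizer_packed_at_ends assms(2) by blast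
  moreover have "packed_at_ends n m A \<Longrightarrow> is_maximizer n A"
    using packed_at_ends_imp_maximizer[OF sub] assms(2) by blast
  ultimately show ?thesis
    unfolding packed_at_ends_def[symmetric] using maximizer_imp_local_maximizer by blast
qed

end
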